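(* Suppose a bijective real-linear map $T\colon M_2(\mathbb F)\to M_2(\mathbb F)$ satisfies $\|T(A)T(B)\|=\|T(A)\|\,\|T(B)\|$ whenever $\|AB\|=\|A\|\,\|B\|$. Then $T(\mathbb F I)=\mathbb F I$.
   Context: $\mathbb F$ is $\mathbb C$ or $\mathbb R$ and $\|\cdot\|$ is the spectral norm on $M_2(\mathbb F)$. *)

theory Defs
  imports "HOL-Analysis.Analysis"
begin

definition spec_norm :: "('a::real_normed_field)^2^2 \<Rightarrow> real" where
  "spec_norm A = onorm (\<lambda>x. A *v x)"

definition scalar_mats :: "(('a::real_normed_field)^2^2) set" where
  "scalar_mats = range (\<lambda>c. mat c)"

definition norm_mult_preserver :: "(('a::real_normed_field)^2^2 \<Rightarrow> 'a^2^2) \<Rightarrow> bool" where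
  "norm_mult_preserver T \<longleftrightarrow> bij T \<and> linear T \<and>
     (\<forall>A B. spec_norm (A ** B) = spec_norm A * spec_norm B \<longrightarrow>
            spec_norm (T A ** T B) = spec_norm (T A) * spec_norm (T B))"

end

theory Submission
  imports Defs
begin

(* For 2x2 matrices, ||B^2|| = ||B||^2 holds exactly when B is normal. Indeed, if a unit vector x
   maximises ||B^2 x||, then x and y = B x both maximise ||B v|| / ||v||, so B* B acts as ||B||^2
   on x and on y. Either x and y span F^2, and B* B is a nonzero scalar, or x is a common
   eigenvector of B and B*, and then the traceless hermitian matrix B B* - B* B is singular,
   hence zero. Therefore T preserves normality.
   For every hermitian or skew-hermitian A the matrices cI + A and cI - A are normal, hence so
   are T(cI) + T(A) and T(cI) - T(A). Polarising the self-commutator W W* - W* W, this says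
   X Z* + Z X* - X* Z - Z* X = 0 for X = T(cI) and every Z (T is onto and every matrix is
   hermitian plus skew-hermitian), which forces X to be scalar. So T maps the real subspace
   F I injectively into itself, hence onto itself. *)

lemma vec2_eq_iff: "(x::'a^2) = y \<longleftrightarrow> x$1 = y$1 \<and> x$2 = y$2"
  by (auto simp: vec_eq_iff forall_2)

lemma mat2_eq_iff:
  "(A::'a^2^2) = B \<longleftrightarrow> A$1$1 = B$1$1 \<and> A$1$2 = B$1$2 \<and> A$2$1 = B$2$1 \<and> A$2$2 = B$2$2"
  by (auto simp: vec_eq_iff forall_2)

lemma matrix_vector_mult_2_nth: "((A::'a::semiring_1^2^2) *v x)$i = A$i$1 * x$1 + A$i$2 * x$2"
  by (simp add: matrix_vector_mult_def sum_2)

lemma matrix_matrix_mult_2_nth: "((A::'a::semiring_1^2^2) ** B)$i$j = A$i$1 * B$1$j + A$i$2 * B$2$j"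
  by (simp add: matrix_matrix_mult_def sum_2)

lemma matrix_add_rdistrib: "(A + B) ** C = A ** C + B ** (C :: 'a::semiring_1^_^_)"
  by (simp add: vec_eq_iff matrix_matrix_mult_def distrib_right sum.distrib)

lemma matrix_diff_ldistrib: "A ** (B - C) = A ** B - A ** (C :: 'a::ring_1^_^_)"
  by (simp add: vec_eq_iff matrix_matrix_mult_def right_diff_distrib sum_subtractf)

lemma matrix_diff_rdistrib: "(A - B) ** C = A ** C - B ** (C :: 'a::ring_1^_^_)"
  by (simp add: vec_eq_iff matrix_matrix_mult_def left_diff_distrib sum_subtractf)

lemma mat_mult_left: "mat c ** A = (\<chi> i j. c * A$i$j)"
  by (simp add: vec_eq_iff matrix_matrix_mult_def mat_def mult_delta_left)

lemma mat_mult_right: "A ** mat c = (\<chi> i j. A$i$j * c)"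
  by (simp add: vec_eq_iff matrix_matrix_mult_def mat_def mult_delta_right)

lemma mat_mult_vector: "mat c *v x = c *s x"
  by (simp add: vec_eq_iff matrix_vector_mult_def mat_def mult_delta_left)

lemma scaleR_eq_of_real_smult: "r *\<^sub>R x = of_real r *s (x :: 'a::real_algebra_1^'n)"
  by (simp add: vec_eq_iff of_real_def)

lemma mat_mult_commute: "mat c ** A = A ** (mat c :: 'a::comm_semiring_1^'n^'n)"
  by (simp add: mat_mult_left mat_mult_right mult.commute)

lemma mat_mult_mat: "mat a ** mat b = (mat (a * b) :: 'a::semiring_1^'n^'n)"
  unfolding mat_mult_left by (simp add: vec_eq_iff mat_def)

lemma mat_add_mult_mat_add:
  "(mat a + A) ** (mat b + B) = mat (a * b) + (mat a ** B + mat b ** A) + A ** (B :: 'a::comm_semiring_1^'n^'n)"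
  by (simp add: matrix_add_ldistrib matrix_add_rdistrib mat_mult_mat mat_mult_commute[of b A] add_ac)

lemma mult_eq_mat_imp_commute:
  fixes A B :: "'a::field^'n^'n"
  assumes AB: "A ** B = mat c" and c: "c \<noteq> 0"
  shows "B ** A = mat c"
proof -
  have "(mat (inverse c) ** A) ** B = mat 1"
    using AB c by (simp add: matrix_mul_assoc[symmetric] mat_mult_mat)
  then have "B ** (mat (inverse c) ** A) = mat 1"
    by (simp add: matrix_left_right_inverse)
  moreover have "mat (inverse c) ** (B ** A) = B ** (mat (inverse c) ** A)"
    by (simp only: matrix_mul_assoc mat_mult_commute[of "inverse c" B])
  ultimately have "mat c ** (mat (inverse c) ** (B ** A)) = mat c"
    by simp
  then show ?thesis
    using c by (simp add: matrix_mul_assoc mat_mult_mat)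
qed

lemma eq_mat_if_two_eigenvectors:
  fixes M :: "'a::field^2^2"
  assumes Mx: "M *v x = c *s x" and My: "M *v y = c *s y" and indep: "x$1 * y$2 - x$2 * y$1 \<noteq> 0"
  shows "M = mat c"
proof -
  define P :: "'a^2^2" where "P = (\<chi> i j. if j = 1 then x$i else y$i)"
  have "M ** P = mat c ** P"
    using Mx My by (simp add: P_def mat2_eq_iff vec2_eq_iff matrix_vector_mult_2_nth matrix_matrix_mult_2_nth mat_def)
  moreover have "invertible P"
    using indep by (simp add: invertible_det_nz det_2 P_def mult.commute)
  then obtain Q where "P ** Q = mat 1"
    by (auto simp: invertible_def)
  ultimately show ?thesis
    by (metis matrix_mul_assoc matrix_mul_rid)
qed

lemma collinear_if_det2_eq_0:
  fixes x y :: "'a::field^2"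
  assumes "x$1 * y$2 - x$2 * y$1 = 0" "x \<noteq> 0"
  shows "\<exists>l. y = l *s x"
proof (cases "x$1 = 0")
  case True
  then have "x$2 \<noteq> 0" using assms(2) by (auto simp: vec2_eq_iff)
  then show ?thesis using True assms(1)
    by (intro exI[of _ "y$2 / x$2"]) (auto simp: vec2_eq_iff field_simps)
next
  case False
  then show ?thesis using assms(1)
    by (intro exI[of _ "y$1 / x$1"]) (auto simp: vec2_eq_iff field_simps)
qed

section \<open>The spectral norm\<close>

lemma linear_coeff_eq_0_if_quadratic_nonpos:
  fixes c d :: real
  assumes "\<And>t. 2*t*c + t^2*d \<le> 0"
  shows "c = 0"
proof (rule ccontr)
  assume "c \<noteq> 0"
  define t where "t = c / (\<bar>d\<bar> + 1)"
  have "t * c > 0"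
    using \<open>c \<noteq> 0\<close> by (simp add: t_def power2_eq_square[symmetric])
  moreover have "t^2 * \<bar>d\<bar> \<le> t * c"
  proof -
    have "t^2 * \<bar>d\<bar> \<le> t^2 * (\<bar>d\<bar> + 1)"
      by (simp add: mult_left_mono)
    also have "\<dots> = t * c"
      by (simp add: t_def power2_eq_square)
    finally show ?thesis .
  qed
  moreover have "- (t^2 * \<bar>d\<bar>) \<le> t^2*d"
    using mult_left_mono[of "-\<bar>d\<bar>" d "t^2"] by simp
  ultimately have "2*t*c + t^2*d > 0"
    by linarith
  with assms[of t] show False
    by linarith
qed

lemma inner_eq_if_norm_bound_attained:
  fixes f :: "'a::real_inner \<Rightarrow> 'b::real_inner"
  assumes f: "linear f" and bound: "\<And>x. norm (f x) \<le> s * norm x" and z: "norm (f z) = s * norm z"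
  shows "inner (f z) (f w) = s^2 * inner z w"
proof -
  let ?c = "inner (f z) (f w) - s^2 * inner z w"
  let ?d = "inner (f w) (f w) - s^2 * inner w w"
  have "2*t*?c + t^2*?d \<le> 0" for t
  proof -
    have "(norm (f (z + t *\<^sub>R w)))^2 \<le> (s * norm (z + t *\<^sub>R w))^2"
      by (rule power_mono[OF bound norm_ge_zero])
    then have "inner (f z + t *\<^sub>R f w) (f z + t *\<^sub>R f w) \<le> s^2 * inner (z + t *\<^sub>R w) (z + t *\<^sub>R w)"
      by (simp add: linear_add[OF f] linear_scale[OF f] power2_norm_eq_inner power_mult_distrib)
    moreover have "inner (f z) (f z) = s^2 * inner z z"
      using z by (simp add: power2_norm_eq_inner[symmetric] power_mult_distrib)
    ultimately show ?thesis
      by (simp add: inner_add_left inner_add_right inner_commute[of w z] inner_commute[of "f w" "f z"]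
          algebra_simps power2_eq_square)
  qed
  then show ?thesis
    using linear_coeff_eq_0_if_quadratic_nonpos[of ?c ?d] by simp
qed

lemma norm_le_spec_norm:
  fixes A :: "'a::{euclidean_space,real_normed_field}^2^2"
  shows "norm (A *v x) \<le> spec_norm A * norm x"
  unfolding spec_norm_def by (rule onorm) (rule matrix_vector_mul_bounded_linear)

lemma spec_norm_nonneg:
  fixes A :: "'a::{euclidean_space,real_normed_field}^2^2"
  shows "0 \<le> spec_norm A"
  unfolding spec_norm_def by (rule onorm_pos_le) (rule matrix_vector_mul_bounded_linear)

lemma spec_norm_le:
  fixes A :: "'a::{euclidean_space,real_normed_field}^2^2"
  assumes "\<And>x. norm (A *v x) \<le> b * norm x"
  shows "spec_norm A \<le> b"
  unfolding spec_norm_def using assms by (rule onorm_le)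

lemma spec_norm_eq_0_iff:
  fixes A :: "'a::{euclidean_space,real_normed_field}^2^2"
  shows "spec_norm A = 0 \<longleftrightarrow> A = 0"
  unfolding spec_norm_def
  by (simp add: onorm_eq_0[OF matrix_vector_mul_bounded_linear] matrix_eq)

lemma spec_norm_mult_le:
  fixes A B :: "'a::{euclidean_space,real_normed_field}^2^2"
  shows "spec_norm (A ** B) \<le> spec_norm A * spec_norm B"
proof (rule spec_norm_le)
  fix x
  have "norm ((A ** B) *v x) \<le> spec_norm A * norm (B *v x)"
    by (simp add: matrix_vector_mul_assoc[symmetric] norm_le_spec_norm)
  also have "\<dots> \<le> spec_norm A * (spec_norm B * norm x)"
    by (rule mult_left_mono[OF norm_le_spec_norm spec_norm_nonneg])
  finally show "norm ((A ** B) *v x) \<le> spec_norm A * spec_norm B * norm x"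
    by (simp add: mult.assoc)
qed

lemma spec_norm_attained:
  fixes A :: "'a::{euclidean_space,real_normed_field}^2^2"
  obtains x where "norm x = 1" "norm (A *v x) = spec_norm A"
proof -
  have "continuous_on (sphere 0 1) (\<lambda>x. norm (A *v x))"
    by (intro continuous_on_norm linear_continuous_on matrix_vector_mul_bounded_linear)
  moreover have "sphere (0::'a^2) 1 \<noteq> {}"
    using vector_choose_size[of 1] by fastforce
  ultimately obtain x where x: "x \<in> sphere 0 1" and max: "\<And>y. y \<in> sphere 0 1 \<Longrightarrow> norm (A *v y) \<le> norm (A *v x)"
    using continuous_attains_sup[OF compact_sphere] by blast
  have "spec_norm A \<le> norm (A *v x)"
  proof (rule spec_norm_le)
    fix y :: "'a^2"
    show "norm (A *v y) \<le> norm (A *v x) * norm y"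
    proof (cases "y = 0")
      case False
      then have "norm (A *v (inverse (norm y) *\<^sub>R y)) \<le> norm (A *v x)"
        by (intro max) simp
      then show ?thesis
        using False by (simp add: linear_scale[OF matrix_vector_mul_linear] field_simps)
    qed simp
  qed
  moreover have "norm (A *v x) \<le> spec_norm A"
    using norm_le_spec_norm[of A x] x by simp
  ultimately show ?thesis
    using that x by simp
qed

lemma linear_mat: "linear (mat :: 'a::real_algebra_1 \<Rightarrow> 'a^'n^'n)"
  by (rule linearI) (simp_all add: vec_eq_iff mat_def)

lemma subspace_scalar_mats: "subspace (scalar_mats :: ('a::real_normed_field^2^2) set)"
  unfolding scalar_mats_def by (rule linear_subspace_image[OF linear_mat subspace_UNIV])

lemma linear_inj_image_subspace_eq:
  fixes T :: "'a::euclidean_space \<Rightarrow> 'a"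
  assumes "linear T" "inj T" "subspace S" "T ` S \<subseteq> S"
  shows "T ` S = S"
proof (rule subspace_dim_equal)
  show "dim S \<le> dim (T ` S)"
    using dim_image_eq[OF assms(1) inj_on_subset[OF assms(2) subset_UNIV]] by simp
qed (use assms linear_subspace_image in auto)

section \<open>Normal matrices\<close>

text \<open>\<open>cj a\<close> is the adjoint of multiplication by \<open>a\<close> for the real inner product of \<open>'a\<close>;
  this treats \<open>\<real>\<close> (\<open>cj = id\<close>) and \<open>\<complex>\<close> (\<open>cj = cnj\<close>) uniformly.\<close>

locale conjugation =
  fixes cj :: "'a::{euclidean_space,real_normed_field} \<Rightarrow> 'a"
  assumes inner_mult_left: "inner (a * b) c = inner b (cj a * c)"
    and mult_cj_self: "a * cj a = of_real ((norm a)\<^sup>2)"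
begin

lemma cj_eqI:
  assumes "\<And>b c. inner (a * b) c = inner b (d * c)"
  shows "cj a = d"
proof -
  have "\<forall>b. inner b (cj a * 1) = inner b (d * 1)"
    using assms inner_mult_left by metis
  then show ?thesis
    by (simp add: vector_eq_ldot)
qed

lemma cj_add: "cj (a + b) = cj a + cj b"
  by (rule cj_eqI) (simp add: distrib_right inner_add_left inner_add_right inner_mult_left)

lemma cj_minus: "cj (- a) = - cj a"
  by (rule cj_eqI) (simp add: inner_mult_left)

lemma cj_diff: "cj (a - b) = cj a - cj b"
  using cj_add[of a "- b"] by (simp add: cj_minus)

lemma cj_mult: "cj (a * b) = cj a * cj b"
  by (rule cj_eqI) (simp add: mult.assoc inner_mult_left mult.left_commute)

lemma cj_cj: "cj (cj a) = a"
proof (rule cj_eqI)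
  fix b c
  have "inner (cj a * b) c = inner c (cj a * b)"
    by (rule inner_commute)
  also have "\<dots> = inner (a * c) b"
    by (rule inner_mult_left[symmetric])
  also have "\<dots> = inner b (a * c)"
    by (rule inner_commute)
  finally show "inner (cj a * b) c = inner b (a * c)" .
qed

lemma cj_of_real: "cj (of_real r) = of_real r"
  by (rule cj_eqI) (simp add: scaleR_conv_of_real[symmetric])

lemma cj_0 [simp]: "cj 0 = 0"
  using cj_of_real[of 0] by simp

lemma cj_1 [simp]: "cj 1 = 1"
  using cj_of_real[of 1] by simp

lemma cj_scaleR: "cj (r *\<^sub>R a) = r *\<^sub>R cj a"
  by (simp add: scaleR_conv_of_real cj_mult cj_of_real)

lemma linear_cj: "linear cj"
  by (simp add: linearI cj_add cj_scaleR)

definition ctrans :: "'a^'n^'m \<Rightarrow> 'a^'m^'n" where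
  "ctrans A = (\<chi> i j. cj (A$j$i))"

lemma ctrans_nth [simp]: "ctrans A $ i $ j = cj (A$j$i)"
  by (simp add: ctrans_def)

lemma ctrans_ctrans [simp]: "ctrans (ctrans A) = A"
  by (simp add: vec_eq_iff cj_cj)

lemma ctrans_add: "ctrans (A + B) = ctrans A + ctrans B"
  by (simp add: vec_eq_iff cj_add)

lemma ctrans_diff: "ctrans (A - B) = ctrans A - ctrans B"
  by (simp add: vec_eq_iff cj_diff)

lemma ctrans_minus: "ctrans (- A) = - ctrans A"
  by (simp add: vec_eq_iff cj_minus)

lemma ctrans_scaleR: "ctrans (r *\<^sub>R A) = r *\<^sub>R ctrans A"
  by (simp add: vec_eq_iff cj_scaleR)

lemma ctrans_mat: "ctrans (mat c) = mat (cj c)"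
  by (simp add: vec_eq_iff mat_def)

lemma ctrans_mult: "ctrans (A ** B) = ctrans B ** ctrans A"
  by (simp add: vec_eq_iff matrix_matrix_mult_def linear_sum[OF linear_cj] cj_mult mult.commute)

lemma inner_ctrans: "inner (A *v v) w = inner v (ctrans A *v w)"
proof -
  have "inner (A *v v) w = (\<Sum>i\<in>UNIV. \<Sum>j\<in>UNIV. inner (v$j) (cj (A$i$j) * w$i))"
    by (simp add: inner_vec_def matrix_vector_mult_def inner_sum_left inner_mult_left)
  also have "\<dots> = (\<Sum>j\<in>UNIV. \<Sum>i\<in>UNIV. inner (v$j) (cj (A$i$j) * w$i))"
    by (rule sum.swap)
  also have "\<dots> = inner v (ctrans A *v w)"
    by (simp add: inner_vec_def matrix_vector_mult_def inner_sum_right)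
  finally show ?thesis .
qed

lemma inner_ctrans': "inner (ctrans A *v v) w = inner v (A *v w)"
  using inner_ctrans[of "ctrans A"] by simp

definition normal_mat :: "'a^'n^'n \<Rightarrow> bool" where
  "normal_mat A \<longleftrightarrow> A ** ctrans A = ctrans A ** A"

lemma norm_ctrans_mult_eq_if_normal:
  assumes "normal_mat A"
  shows "norm (ctrans A *v y) = norm (A *v y)"
proof -
  have "inner (ctrans A *v y) (ctrans A *v y) = inner y ((A ** ctrans A) *v y)"
    by (simp only: inner_ctrans' matrix_vector_mul_assoc)
  also have "\<dots> = inner y ((ctrans A ** A) *v y)"
    using assms by (simp add: normal_mat_def)
  also have "\<dots> = inner (A *v y) (A *v y)"
    by (simp only: inner_ctrans matrix_vector_mul_assoc)
  finally show ?thesis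
    by (simp add: norm_eq_sqrt_inner)
qed

lemma spec_norm_square_if_normal:
  fixes A :: "'a^2^2"
  assumes "normal_mat A"
  shows "spec_norm (A ** A) = spec_norm A * spec_norm A"
proof (rule antisym)
  let ?t = "spec_norm (A ** A)"
  show "?t \<le> spec_norm A * spec_norm A"
    by (rule spec_norm_mult_le)
  have "norm (A *v x) \<le> sqrt ?t * norm x" for x
  proof (rule power2_le_imp_le)
    have "(norm (A *v x))^2 = inner x (ctrans A *v (A *v x))"
      by (simp only: power2_norm_eq_inner inner_ctrans)
    also have "\<dots> \<le> norm x * norm (ctrans A *v (A *v x))"
      by (rule norm_cauchy_schwarz)
    also have "\<dots> = norm x * norm ((A ** A) *v x)"
      by (simp only: norm_ctrans_mult_eq_if_normal[OF assms] matrix_vector_mul_assoc[symmetric])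
    also have "\<dots> \<le> norm x * (?t * norm x)"
      by (rule mult_left_mono[OF norm_le_spec_norm norm_ge_zero])
    also have "\<dots> = (sqrt ?t * norm x)^2"
      using spec_norm_nonneg[of "A ** A"] by (simp add: power2_eq_square)
    finally show "(norm (A *v x))^2 \<le> (sqrt ?t * norm x)^2" .
  qed (simp add: spec_norm_nonneg)
  then have "spec_norm A \<le> sqrt ?t"
    by (rule spec_norm_le)
  then have "spec_norm A * spec_norm A \<le> sqrt ?t * sqrt ?t"
    by (intro mult_mono spec_norm_nonneg) (simp_all add: spec_norm_nonneg)
  then show "spec_norm A * spec_norm A \<le> ?t"
    using spec_norm_nonneg[of "A ** A"] by simp
qed

lemma ctrans_mult_eq_if_spec_norm_attained:
  fixes A :: "'a^2^2"
  assumes "norm (A *v z) = spec_norm A * norm z"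
  shows "ctrans A *v (A *v z) = (spec_norm A)^2 *\<^sub>R z"
proof -
  have "\<forall>w. inner w (ctrans A *v (A *v z)) = inner w ((spec_norm A)^2 *\<^sub>R z)"
  proof
    fix w
    have "inner w (ctrans A *v (A *v z)) = inner (A *v w) (A *v z)"
      by (rule inner_ctrans[symmetric])
    also have "\<dots> = inner (A *v z) (A *v w)"
      by (rule inner_commute)
    also have "\<dots> = (spec_norm A)^2 * inner z w"
      using inner_eq_if_norm_bound_attained[OF matrix_vector_mul_linear norm_le_spec_norm assms] .
    also have "\<dots> = inner w ((spec_norm A)^2 *\<^sub>R z)"
      by (simp add: inner_commute)
    finally show "inner w (ctrans A *v (A *v z)) = inner w ((spec_norm A)^2 *\<^sub>R z)" .
  qed
  then show ?thesis
    by (simp only: vector_eq_ldot)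
qed

lemma selfadjoint_traceless_square:
  fixes C :: "'a^2^2"
  assumes "ctrans C = C" and "C$1$1 + C$2$2 = 0"
  shows "C ** C = mat (of_real ((norm (C$1$1))^2 + (norm (C$1$2))^2))"
proof -
  have "C$2$2 = - C$1$1" "C$2$1 = cj (C$1$2)" and real: "cj (C$1$1) = C$1$1"
    using assms by (simp_all add: mat2_eq_iff eq_neg_iff_add_eq_0 add.commute)
  moreover have "C$1$1 * C$1$1 = of_real ((norm (C$1$1))^2)"
    using mult_cj_self[of "C$1$1"] by (simp only: real)
  ultimately show ?thesis
    by (simp add: mat2_eq_iff matrix_matrix_mult_2_nth mat_def mult_cj_self algebra_simps del: of_real_power)
qed

lemma selfadjoint_traceless_singular_eq_0:
  fixes C :: "'a^2^2"
  assumes "ctrans C = C" "C$1$1 + C$2$2 = 0" and "C *v x = 0" "x \<noteq> 0"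
  shows "C = 0"
proof -
  let ?r = "(norm (C$1$1))^2 + (norm (C$1$2))^2"
  have "of_real ?r *s x = (C ** C) *v x"
    by (simp add: selfadjoint_traceless_square[OF assms(1,2)] mat_mult_vector)
  also have "\<dots> = 0"
    by (simp add: matrix_vector_mul_assoc[symmetric] assms(3))
  finally have "(of_real ?r :: 'a) = 0"
    using assms(4) by (simp only: vector_mul_eq_0) blast
  then have "?r = 0"
    by (simp only: of_real_eq_0_iff)
  then have "C$1$1 = 0" "C$1$2 = 0"
    by (simp_all add: add_nonneg_eq_0_iff)
  moreover have "C$2$2 = - C$1$1" "C$2$1 = cj (C$1$2)"
    using assms(1,2) by (simp_all add: mat2_eq_iff eq_neg_iff_add_eq_0 add.commute)
  ultimately show ?thesis
    by (simp add: mat2_eq_iff)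
qed

lemma normal_if_ctrans_mult_eq_mat:
  assumes "ctrans B ** B = mat c" "c \<noteq> 0"
  shows "normal_mat B"
  using mult_eq_mat_imp_commute[OF assms] assms(1) by (simp add: normal_mat_def)

lemma normal_if_eigenvector_of_ctrans_mult:
  fixes B :: "'a^2^2"
  assumes Bx: "B *v x = l *s x" and BBx: "ctrans B *v (B *v x) = c *s x"
    and "c \<noteq> 0" "x \<noteq> 0"
  shows "normal_mat B"
proof -
  have "l \<noteq> 0"
    using assms by (auto simp: vector_mul_eq_0)
  have "l *s (ctrans B *v x) = c *s x"
    using BBx by (simp add: Bx vector_scalar_commute)
  then have B'x: "ctrans B *v x = (c / l) *s x"
    using \<open>l \<noteq> 0\<close> by (simp add: vec_eq_iff field_simps)
  define C where "C = B ** ctrans B - ctrans B ** B"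
  have "C *v x = B *v (ctrans B *v x) - ctrans B *v (B *v x)"
    by (simp add: C_def matrix_vector_mult_diff_rdistrib matrix_vector_mul_assoc)
  also have "\<dots> = 0"
    using BBx \<open>l \<noteq> 0\<close> by (simp add: B'x Bx vector_scalar_commute vec_eq_iff)
  finally have "C *v x = 0" .
  moreover have "ctrans C = C"
    by (simp add: C_def ctrans_diff ctrans_mult)
  moreover have "C$1$1 + C$2$2 = 0"
    by (simp add: C_def matrix_matrix_mult_2_nth algebra_simps)
  ultimately have "C = 0"
    using selfadjoint_traceless_singular_eq_0 \<open>x \<noteq> 0\<close> by blast
  then show ?thesis
    by (simp add: C_def normal_mat_def)
qed

lemma normal_if_spec_norm_square:
  fixes B :: "'a^2^2"
  assumes "spec_norm (B ** B) = spec_norm B * spec_norm B"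
  shows "normal_mat B"
proof (cases "B = 0")
  case True
  then show ?thesis
    by (simp add: normal_mat_def)
next
  case False
  define s where "s = spec_norm B"
  have "s > 0"
    using False spec_norm_nonneg[of B] spec_norm_eq_0_iff[of B] by (simp add: s_def)
  obtain x where x: "norm x = 1" "norm ((B ** B) *v x) = s * s"
    using spec_norm_attained[of "B ** B"] assms by (metis s_def)
  define y where "y = B *v x"
  have By: "norm (B *v y) = s * s"
    using x by (simp add: y_def matrix_vector_mul_assoc)
  have "s * s \<le> s * norm y"
    using By norm_le_spec_norm[of B y] by (simp add: s_def)
  moreover have "norm y \<le> s"
    using norm_le_spec_norm[of B x] x by (simp add: y_def s_def)
  ultimately have "norm y = s"
    using \<open>s > 0\<close> by (simp add: mult_le_cancel_left_pos)
  let ?c = "of_real (s^2) :: 'a"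
  have "?c \<noteq> 0"
    using \<open>s > 0\<close> by simp
  have x_eig: "ctrans B *v (B *v x) = ?c *s x"
    using ctrans_mult_eq_if_spec_norm_attained[of B x] x \<open>norm y = s\<close>
    by (simp add: y_def s_def scaleR_eq_of_real_smult)
  have y_eig: "ctrans B *v (B *v y) = ?c *s y"
    using ctrans_mult_eq_if_spec_norm_attained[of B y] By \<open>norm y = s\<close>
    by (simp add: s_def scaleR_eq_of_real_smult)
  have "x \<noteq> 0"
    using x by auto
  show ?thesis
  proof (cases "x$1 * y$2 - x$2 * y$1 = 0")
    case True
    then obtain l where "y = l *s x"
      using collinear_if_det2_eq_0 \<open>x \<noteq> 0\<close> by blast
    then show ?thesis
      using normal_if_eigenvector_of_ctrans_mult x_eig \<open>?c \<noteq> 0\<close> \<open>x \<noteq> 0\<close> by (simp add: y_def)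
  next
    case False
    then have "ctrans B ** B = mat ?c"
      using eq_mat_if_two_eigenvectors x_eig y_eig by (simp add: matrix_vector_mul_assoc)
    then show ?thesis
      using normal_if_ctrans_mult_eq_mat \<open>?c \<noteq> 0\<close> by blast
  qed
qed

lemma normal_iff_spec_norm_square:
  fixes B :: "'a^2^2"
  shows "normal_mat B \<longleftrightarrow> spec_norm (B ** B) = spec_norm B * spec_norm B"
  using normal_if_spec_norm_square spec_norm_square_if_normal by blast

section \<open>Norm-multiplicativity preservers\<close>

text \<open>Polarisation of the self-commutator \<open>W ** ctrans W - ctrans W ** W\<close>.\<close>

definition polar_commutator :: "'a^'n^'n \<Rightarrow> 'a^'n^'n \<Rightarrow> 'a^'n^'n" where
  "polar_commutator X Z = X ** ctrans Z + Z ** ctrans X - ctrans X ** Z - ctrans Z ** X"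

lemma polar_commutator_eq_0_if_normal:
  assumes "normal_mat (X + Z)" "normal_mat (X - Z)"
  shows "polar_commutator X Z = 0"
proof -
  have "2 *\<^sub>R polar_commutator X Z =
      ((X + Z) ** ctrans (X + Z) - ctrans (X + Z) ** (X + Z))
      - ((X - Z) ** ctrans (X - Z) - ctrans (X - Z) ** (X - Z))"
    by (simp add: polar_commutator_def ctrans_add ctrans_diff matrix_add_ldistrib matrix_add_rdistrib
        matrix_diff_ldistrib matrix_diff_rdistrib scaleR_2 algebra_simps)
  also have "\<dots> = 0"
    using assms by (simp add: normal_mat_def)
  finally show ?thesis
    by simp
qed

lemma polar_commutator_add: "polar_commutator X (Z + W) = polar_commutator X Z + polar_commutator X W"
  by (simp add: polar_commutator_def ctrans_add matrix_add_ldistrib matrix_add_rdistrib algebra_simps)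

lemma normal_scalar_add:
  assumes "ctrans A = A \<or> ctrans A = - A"
  shows "normal_mat (mat c + A)"
proof -
  obtain e where e: "ctrans A = e *\<^sub>R A"
    using assms by (metis scaleR_one scaleR_minus1_left)
  have "A ** ctrans A = ctrans A ** A"
    by (simp add: e matrix_scalar_ac scalar_matrix_assoc[symmetric])
  then show ?thesis
    unfolding normal_mat_def ctrans_add ctrans_mat mat_add_mult_mat_add by (simp add: mult.commute add_ac)
qed

lemma hermitian_skew_decomposition:
  obtains H S :: "'a^'n^'n" where "A = H + S" "ctrans H = H" "ctrans S = - S"
proof
  show "A = (1/2) *\<^sub>R (A + ctrans A) + (1/2) *\<^sub>R (A - ctrans A)"
    by (simp add: algebra_simps flip: scaleR_add_left)
  show "ctrans ((1/2) *\<^sub>R (A + ctrans A)) = (1/2) *\<^sub>R (A + ctrans A)"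
    by (simp add: ctrans_scaleR ctrans_add add.commute)
  show "ctrans ((1/2) *\<^sub>R (A - ctrans A)) = - ((1/2) *\<^sub>R (A - ctrans A))"
    by (simp add: ctrans_scaleR ctrans_diff flip: scaleR_minus_right)
qed

lemma preserver_normal:
  fixes T :: "'a^2^2 \<Rightarrow> 'a^2^2"
  assumes "norm_mult_preserver T" "normal_mat B"
  shows "normal_mat (T B)"
  using assms by (simp add: norm_mult_preserver_def normal_iff_spec_norm_square)

lemma polar_commutator_image_scalar_eq_0:
  fixes T :: "'a^2^2 \<Rightarrow> 'a^2^2"
  assumes T: "norm_mult_preserver T"
  shows "polar_commutator (T (mat c)) Z = 0"
proof -
  have lin: "linear T" and "surj T"
    using T by (simp_all add: norm_mult_preserver_def bij_is_surj)
  have hs: "polar_commutator (T (mat c)) (T A) = 0" if "ctrans A = A \<or> ctrans A = - A" for A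
  proof (rule polar_commutator_eq_0_if_normal)
    have "ctrans (- A) = - A \<or> ctrans (- A) = - (- A)"
      using that by (auto simp: ctrans_minus)
    then have "normal_mat (T (mat c + A))" "normal_mat (T (mat c + - A))"
      using preserver_normal[OF T] normal_scalar_add that by blast+
    then show "normal_mat (T (mat c) + T A)" "normal_mat (T (mat c) - T A)"
      by (simp_all add: linear_add[OF lin] linear_diff[OF lin] flip: diff_conv_add_uminus)
  qed
  obtain A where "Z = T A"
    using \<open>surj T\<close> by (metis surjD)
  moreover obtain H S where "A = H + S" "ctrans H = H" "ctrans S = - S"
    by (rule hermitian_skew_decomposition)
  ultimately show ?thesis
    using hs by (simp add: linear_add[OF lin] polar_commutator_add)
qed

lemma eq_0_if_double_mult_cj_self_eq_0: "a * cj a + a * cj a = 0 \<Longrightarrow> a = 0"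
  by (metis cj_0 cj_cj mult_2 mult_eq_0_iff zero_neq_numeral)

lemma scalar_if_polar_commutator_eq_0:
  fixes X :: "'a^2^2"
  assumes "\<And>Z. polar_commutator X Z = 0"
  shows "X = mat (X$1$1)"
proof -
  define E12 :: "'a \<Rightarrow> 'a^2^2" where "E12 c = (\<chi> i j. if i = 1 \<and> j = 2 then c else 0)" for c
  define E21 :: "'a \<Rightarrow> 'a^2^2" where "E21 c = (\<chi> i j. if i = 2 \<and> j = 1 then c else 0)" for c
  have "polar_commutator X (E12 (X$1$2)) $ 1 $ 1 = X$1$2 * cj (X$1$2) + X$1$2 * cj (X$1$2)"
    and "polar_commutator X (E21 (X$2$1)) $ 1 $ 1 = - (X$2$1 * cj (X$2$1) + X$2$1 * cj (X$2$1))"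
    and "polar_commutator X (E12 1) $ 2 $ 1 = X$2$2 - X$1$1"
    by (simp_all add: polar_commutator_def E12_def E21_def matrix_matrix_mult_2_nth)
  then have "X$1$2 * cj (X$1$2) + X$1$2 * cj (X$1$2) = 0"
    and "X$2$1 * cj (X$2$1) + X$2$1 * cj (X$2$1) = 0"
    and "X$2$2 = X$1$1"
    by (simp_all add: assms)
  then have "X$1$2 = 0" "X$2$1 = 0" "X$2$2 = X$1$1"
    using eq_0_if_double_mult_cj_self_eq_0 by blast+
  then show ?thesis
    by (simp add: mat2_eq_iff mat_def)
qed

lemma preserver_image_scalar_mats:
  fixes T :: "'a^2^2 \<Rightarrow> 'a^2^2"
  assumes T: "norm_mult_preserver T"
  shows "T ` scalar_mats = scalar_mats"
proof (rule linear_inj_image_subspace_eq)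
  show "linear T" "inj T"
    using T by (simp_all add: norm_mult_preserver_def bij_is_inj)
  show "T ` scalar_mats \<subseteq> scalar_mats"
    using scalar_if_polar_commutator_eq_0[OF polar_commutator_image_scalar_eq_0[OF T]]
    by (auto simp: scalar_mats_def)
qed (rule subspace_scalar_mats)

end

interpretation real: conjugation "\<lambda>x::real. x"
  by unfold_locales (simp_all add: power2_eq_square)

interpretation complex: conjugation cnj
proof
  show "inner (a * b) c = inner b (cnj a * c)" for a b c
    by (simp add: inner_complex_def algebra_simps)
  show "a * cnj a = of_real ((norm a)\<^sup>2)" for a
    by (rule complex_norm_square[symmetric])
qed

theorem mainTheorem11:
  shows "(\<forall>T :: real^2^2 \<Rightarrow> real^2^2. norm_mult_preserver T \<longrightarrow> T ` scalar_mats = scalar_mats)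
       \<and> (\<forall>T :: complex^2^2 \<Rightarrow> complex^2^2. norm_mult_preserver T \<longrightarrow> T ` scalar_mats = scalar_mats)"
  using real.preserver_image_scalar_mats complex.preserver_image_scalar_mats by blast

end
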